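(* Let $p:E\to B$ be a surjective morphism in $\mathbf{CLS}$ and $E'$ a closure space with the same underlying set as $E$ such that $1_E:E'\to E$ is a morphism in $\mathbf{CLS}$ and the first projection $\pi_1:E\times_BE'\to E'$, $(e,e')\mapsto e$, is a morphism in $\mathbf{CLS}$ (where $E\times_BE'$ is the pullback in $\mathbf{CLS}$ of $p$ and $p:E'\to B$). Write $p'$ for the map $p$ regarded as a morphism $E'\to B$. If both $p$ and $p'$ are regular epimorphisms in $\mathbf{CLS}$, then for every $Y\in\mathcal{C}_{E'}\setminus\mathcal{C}_E$ there exists $Y^*\in\mathcal{C}_{E'}\setminus\mathcal{C}_E$ with $Y\subsetneq Y^*$. In particular, if $\mathcal{C}_{E'}\neq\mathcal{C}_E$, then $E$ is infinite.
   Context: A closure space is a pair $(A,\mathcal{C}_A)$ where $A$ is a set and $\mathcal{C}_A$ is a set of subsets of $A$ closed under arbitrary intersections (so $A\in\mathcal{C}_A$); elements of $\mathcal{C}_A$ are called closed. The category $\mathbf{CLS}$ has closure spaces as objects and, as morphisms $\alpha:A\to B$, maps with $\alpha^{-1}(B')\in\mathcal{C}_A$ for all $B'\in\mathcal{C}_B$. Pullbacks in $\mathbf{CLS}$ are set-theoretic pullbacks with closed sets $\pi_1^{-1}(E_0)\cap\pi_2^{-1}(A_0)$ for $E_0,A_0$ closed in the factors. A morphism $q:E\to B$ in $\mathbf{CLS}$ is a regular epimorphism iff it is surjective and $\mathcal{C}_B=\{X\subseteq B\mid q^{-1}(X)\in\mathcal{C}_E\}$. *)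

theory Defs
  imports Main "HOL-Library.FuncSet"
begin

definition closure_space :: "'a set \<Rightarrow> 'a set set \<Rightarrow> bool" where
  "closure_space A C \<longleftrightarrow> C \<subseteq> Pow A \<and> (\<forall>S. S \<subseteq> C \<longrightarrow> A \<inter> \<Inter>S \<in> C)"

definition cls_mor :: "'a set \<Rightarrow> 'a set set \<Rightarrow> 'b set \<Rightarrow> 'b set set \<Rightarrow> ('a \<Rightarrow> 'b) \<Rightarrow> bool" where
  "cls_mor A CA B CB f \<longleftrightarrow> f \<in> A \<rightarrow> B \<and> (\<forall>X\<in>CB. {x\<in>A. f x \<in> X} \<in> CA)"

definition cls_regular_epi :: "'a set \<Rightarrow> 'a set set \<Rightarrow> 'b set \<Rightarrow> 'b set set \<Rightarrow> ('a \<Rightarrow> 'b) \<Rightarrow> bool" where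
  "cls_regular_epi A CA B CB q \<longleftrightarrow> cls_mor A CA B CB q \<and> q ` A = B \<and>
     CB = {X. X \<subseteq> B \<and> {x\<in>A. q x \<in> X} \<in> CA}"

definition pb_carrier :: "'a set \<Rightarrow> 'c set \<Rightarrow> ('a \<Rightarrow> 'b) \<Rightarrow> ('c \<Rightarrow> 'b) \<Rightarrow> ('a \<times> 'c) set" where
  "pb_carrier A A' f g = {(x, y). x \<in> A \<and> y \<in> A' \<and> f x = g y}"

definition pb_closed :: "'a set \<Rightarrow> 'a set set \<Rightarrow> 'c set \<Rightarrow> 'c set set \<Rightarrow> ('a \<Rightarrow> 'b) \<Rightarrow> ('c \<Rightarrow> 'b)
    \<Rightarrow> ('a \<times> 'c) set set" where
  "pb_closed A CA A' CA' f g =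
     {{z \<in> pb_carrier A A' f g. fst z \<in> X0 \<and> snd z \<in> Y0} | X0 Y0. X0 \<in> CA \<and> Y0 \<in> CA'}"

end

theory Submission
  imports Defs
begin

text \<open>The preimage of a closed set Y of E' under the first projection is the fibre product
  of some X0 closed in E and Y0 closed in E'. Restricted to the diagonal this says
  Y = E \<inter> X0 \<inter> Y0, so Y \<subseteq> Y0 and Y0 is not closed in E, since Y is not. Were Y0 = Y, then
  Y would be saturated for p; as p' is a regular epimorphism, p(Y) would be closed in B and
  Y, the preimage of p(Y), closed in E. Hence Y0 strictly extends Y, and on a finite carrier such an
  extension cannot always exist.\<close>

lemma closure_space_Int_closed:
  assumes "closure_space A C" "X \<in> C" "Y \<in> C"
  shows "A \<inter> X \<inter> Y \<in> C"
proof -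
  have "{X, Y} \<subseteq> C"
    using assms(2,3) by simp
  then have "A \<inter> \<Inter>{X, Y} \<in> C"
    using assms(1) unfolding closure_space_def by blast
  then show ?thesis by (simp add: Int_assoc)
qed

lemma cls_mor_id_closed_subset:
  assumes "cls_mor A C' A C id" "C \<subseteq> Pow A"
  shows "C \<subseteq> C'"
proof
  fix X assume "X \<in> C"
  then have "{x\<in>A. id x \<in> X} \<in> C'"
    using assms(1) unfolding cls_mor_def by blast
  moreover have "{x\<in>A. id x \<in> X} = X"
    using \<open>X \<in> C\<close> assms(2) by auto
  ultimately show "X \<in> C'" by simp
qed

lemma cls_mor_pb_fst_preimage:
  assumes "cls_mor (pb_carrier A A' f g) (pb_closed A CA A' CA' f g) A D fst" "Y \<in> D"
  obtains X0 Y0 where "X0 \<in> CA" "Y0 \<in> CA'"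
    "\<And>x y. x \<in> A \<Longrightarrow> y \<in> A' \<Longrightarrow> f x = g y \<Longrightarrow> x \<in> Y \<longleftrightarrow> x \<in> X0 \<and> y \<in> Y0"
proof -
  have "{z \<in> pb_carrier A A' f g. fst z \<in> Y} \<in> pb_closed A CA A' CA' f g"
    using assms unfolding cls_mor_def by blast
  then obtain X0 Y0 where "X0 \<in> CA" "Y0 \<in> CA'" and preimage:
    "{z \<in> pb_carrier A A' f g. fst z \<in> Y} = {z \<in> pb_carrier A A' f g. fst z \<in> X0 \<and> snd z \<in> Y0}"
    unfolding pb_closed_def by blast
  moreover have "x \<in> Y \<longleftrightarrow> x \<in> X0 \<and> y \<in> Y0"
    if "x \<in> A" "y \<in> A'" "f x = g y" for x y
    using that preimage unfolding pb_carrier_def by (simp add: set_eq_iff) blast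
  ultimately show ?thesis using that by blast
qed

lemma cls_regular_epi_saturated_closed:
  assumes "cls_regular_epi A CA' B CB q" "cls_mor A CA B CB q"
    and "X \<in> CA'" "X \<subseteq> A" "{x\<in>A. q x \<in> q ` X} = X"
  shows "X \<in> CA"
proof -
  have "q ` X \<subseteq> B"
    using assms(1,4) unfolding cls_regular_epi_def by blast
  then have "q ` X \<in> CB"
    using assms(1,3,5) unfolding cls_regular_epi_def by auto
  then have "{x\<in>A. q x \<in> q ` X} \<in> CA"
    using assms(2) unfolding cls_mor_def by blast
  then show ?thesis
    using assms(5) by simp
qed

lemma finite_family_no_maximal_empty:
  assumes "finite F" "\<And>Y. Y \<in> F \<Longrightarrow> \<exists>Z\<in>F. Y \<subset> Z"
  shows "F = {}"
proof (rule ccontr)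
  assume "F \<noteq> {}"
  then obtain M where "M \<in> F" "\<forall>Z\<in>F. M \<le> Z \<longrightarrow> M = Z"
    using assms(1) finite_has_maximal by blast
  then show False using assms(2) by blast
qed

lemma pb_fst_mor_strict_extension:
  assumes csE: "closure_space E CE"
    and p_mor: "cls_mor E CE B CB p"
    and p'_reg: "cls_regular_epi E CE' B CB p"
    and pi1_mor: "cls_mor (pb_carrier E E p p) (pb_closed E CE E CE' p p) E CE' fst"
    and Y: "Y \<in> CE' - CE" "Y \<subseteq> E"
  shows "\<exists>Ystar \<in> CE' - CE. Y \<subset> Ystar"
proof -
  obtain X0 Y0 where X0: "X0 \<in> CE" and Y0: "Y0 \<in> CE'" and fibre:
    "\<And>x y. x \<in> E \<Longrightarrow> y \<in> E \<Longrightarrow> p x = p y \<Longrightarrow> x \<in> Y \<longleftrightarrow> x \<in> X0 \<and> y \<in> Y0"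
    using cls_mor_pb_fst_preimage[OF pi1_mor] Y by blast
  have diagonal: "E \<inter> X0 \<inter> Y0 = Y"
    using fibre Y(2) by blast
  then have "Y0 \<notin> CE"
    using closure_space_Int_closed[OF csE X0] Y(1) by auto
  moreover have "Y0 \<noteq> Y"
  proof
    assume "Y0 = Y"
    have "x \<in> Y" if "x \<in> E" "y \<in> Y" "p x = p y" for x y
      using fibre[of y x] that Y(2) \<open>Y0 = Y\<close> by auto
    then have "{x\<in>E. p x \<in> p ` Y} = Y"
      using Y(2) by auto
    then have "Y \<in> CE"
      using cls_regular_epi_saturated_closed[OF p'_reg p_mor] Y by blast
    then show False using Y(1) by blast
  qed
  moreover have "Y \<subseteq> Y0"
    using diagonal by blast
  ultimately show ?thesis using Y0 by blast
qed

theorem lemma4p2: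
  fixes E :: "'e set" and CE CE' :: "'e set set"
    and B :: "'b set" and CB :: "'b set set" and p :: "'e \<Rightarrow> 'b"
  assumes csE: "closure_space E CE"
    and csE': "closure_space E CE'"
    and csB: "closure_space B CB"
    and p_mor: "cls_mor E CE B CB p"
    and p_surj: "p ` E = B"
    and id_mor: "cls_mor E CE' E CE id"
    and pi1_mor: "cls_mor (pb_carrier E E p p) (pb_closed E CE E CE' p p) E CE' fst"
    and p_reg: "cls_regular_epi E CE B CB p"
    and p'_reg: "cls_regular_epi E CE' B CB p"
  shows "(\<forall>Y \<in> CE' - CE. \<exists>Ystar \<in> CE' - CE. Y \<subset> Ystar) \<and> (CE' \<noteq> CE \<longrightarrow> infinite E)"
proof -
  have CE'_Pow: "CE' \<subseteq> Pow E"
    using csE' by (simp add: closure_space_def)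
  have strict: "\<exists>Ystar \<in> CE' - CE. Y \<subset> Ystar" if "Y \<in> CE' - CE" for Y
    using pb_fst_mor_strict_extension[OF csE p_mor p'_reg pi1_mor] that CE'_Pow by blast
  moreover have "infinite E" if "CE' \<noteq> CE"
  proof
    assume "finite E"
    then have "finite (CE' - CE)"
      using CE'_Pow by (meson Diff_subset finite_Pow_iff finite_subset subset_trans)
    then have "CE' - CE = {}"
      using finite_family_no_maximal_empty strict by blast
    moreover have "CE \<subseteq> CE'"
      using cls_mor_id_closed_subset[OF id_mor] csE by (simp add: closure_space_def)
    ultimately show False using that by blast
  qed
  ultimately show ?thesis by blast
qed

end
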